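(* Let $n\ge2$, let $z_1,\dots,z_n$ be indeterminates, and let $m_2\ge1$, $m_1\ge0$ be integers. Let $d=(d_1,\dots,d_{m_2+m_1-1})$ consist of $m_2-1$ entries equal to $2$ followed by $m_1$ entries equal to $1$. Then \[ M(m_2,m_1,n)=\sum_{1\le i<j\le n}\mathrm{monomial}_{\mathrm{inc}}(d,i,j;n)\,(z_i-z_j)^2 . \]
   Context: With $N=m_1+m_2+1$ and sums over all $N$-tuples $(b_1,\dots,b_N)$ of pairwise distinct elements of $\{1,\dots,n\}$, \[ M(m_2,m_1,n)=\sum_{b} z_{b_1}^2\cdots z_{b_{m_2}}^2\,z_{b_{m_2+1}}\cdots z_{b_{m_2+m_1}}\;-\;\sum_{b} z_{b_1}^2\cdots z_{b_{m_2-1}}^2\,z_{b_{m_2}}z_{b_{m_2+1}}\cdots z_{b_{m_2+m_1+1}}. \] For a sequence $d=(d_1,\dots,d_l)$ of nonnegative integers and distinct $i,j$, $\mathrm{monomial}_{\mathrm{inc}}(d,i,j;n)=\sum_{b}\prod_{h=1}^l z_{b_h}^{d_h}$, the sum over all $l$-tuples $b$ of pairwise distinct elements of $\{1,\dots,n\}\setminus\{i,j\}$ (empty product $=1$). *)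

theory Defs
  imports Main
begin

definition distinct_tuple_sum :: "nat set \<Rightarrow> nat list \<Rightarrow> (nat \<Rightarrow> 'a::comm_ring_1) \<Rightarrow> 'a" where
  "distinct_tuple_sum S d z =
     (\<Sum>bs\<in>{bs. length bs = length d \<and> distinct bs \<and> set bs \<subseteq> S}.
        \<Prod>h<length d. z (bs ! h) ^ (d ! h))"

text \<open>M(m2,m1,n): both sums range over N-tuples, N = m1+m2+1; the exponent lists
  record the exponent of each b_h (0 for a tuple entry not appearing in the product).\<close>
definition M :: "nat \<Rightarrow> nat \<Rightarrow> nat \<Rightarrow> (nat \<Rightarrow> 'a::comm_ring_1) \<Rightarrow> 'a" where
  "M m2 m1 n z =
     distinct_tuple_sum {1..n} (replicate m2 2 @ replicate m1 1 @ [0]) z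
   - distinct_tuple_sum {1..n} (replicate (m2 - 1) 2 @ replicate (m1 + 2) 1) z"

definition monomial_inc :: "nat list \<Rightarrow> nat \<Rightarrow> nat \<Rightarrow> nat \<Rightarrow> (nat \<Rightarrow> 'a::comm_ring_1) \<Rightarrow> 'a" where
  "monomial_inc d i j n z = distinct_tuple_sum ({1..n} - {i, j}) d z"

end

theory Submission
  imports Defs
begin

text \<open>Summing out the two trailing tuple positions, both sums in M become sums over ordered
  pairs x \<noteq> y of a monomial in z x, z y times D x y, the distinct-tuple sum with exponents d over
  the indices other than x and y. Hence M is the sum of (z y^2 - z x z y) D x y over x \<noteq> y; since
  D is symmetric, grouping (x, y) with (y, x) produces (z x - z y)^2 D x y.\<close>

definition distinct_tuples :: "'b set \<Rightarrow> nat \<Rightarrow> 'b list set" where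
  "distinct_tuples S L = {bs. length bs = L \<and> distinct bs \<and> set bs \<subseteq> S}"

definition tuple_monomial :: "('b \<Rightarrow> 'a::comm_monoid_mult) \<Rightarrow> 'b list \<Rightarrow> nat list \<Rightarrow> 'a" where
  "tuple_monomial z bs d = prod_list (map2 (\<lambda>b e. z b ^ e) bs d)"

lemma finite_distinct_tuples: "finite S \<Longrightarrow> finite (distinct_tuples S L)"
  by (rule finite_subset[OF _ finite_lists_length_eq[of S L]]) (auto simp: distinct_tuples_def)

lemma distinct_tuples_Suc:
  "distinct_tuples S (Suc L) = (\<lambda>(x, bs). x # bs) ` (SIGMA x:S. distinct_tuples (S - {x}) L)"
proof (rule set_eqI)
  fix xs
  show "xs \<in> distinct_tuples S (Suc L) \<longleftrightarrow> xs \<in> (\<lambda>(x, bs). x # bs) ` (SIGMA x:S. distinct_tuples (S - {x}) L)"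
    by (cases xs) (auto simp: distinct_tuples_def image_iff)
qed

lemma prod_lessThan_eq_tuple_monomial:
  "length bs = length d \<Longrightarrow> (\<Prod>h<length d. z (bs ! h) ^ (d ! h)) = tuple_monomial z bs d"
proof (induction d arbitrary: bs)
  case Nil
  then show ?case by (simp add: tuple_monomial_def)
next
  case (Cons a d)
  then obtain x bs' where "bs = x # bs'" and "length bs' = length d"
    by (cases bs) auto
  with Cons.IH show ?case
    by (simp add: tuple_monomial_def prod.lessThan_Suc_shift del: prod.lessThan_Suc)
qed

lemma distinct_tuple_sum_eq_sum_tuple_monomial:
  "distinct_tuple_sum S d z = (\<Sum>bs\<in>distinct_tuples S (length d). tuple_monomial z bs d)"
  unfolding distinct_tuple_sum_def distinct_tuples_def
  by (rule sum.cong) (auto simp: prod_lessThan_eq_tuple_monomial)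

lemma tuple_monomial_append:
  "length bs = length d \<Longrightarrow> tuple_monomial z (bs @ cs) (d @ e) = tuple_monomial z bs d * tuple_monomial z cs e"
  by (simp add: tuple_monomial_def)

lemma distinct_tuple_sum_append_commute:
  "distinct_tuple_sum S (d @ e) z = distinct_tuple_sum S (e @ d) z"
proof -
  let ?l = "length d" and ?m = "length e"
  have rotate_split: "rotate ?l bs = drop ?l bs @ take ?l bs" if "length bs = ?l + ?m" for bs :: "nat list"
    using that rotate_append[of "take ?l bs" "drop ?l bs"] by simp
  have "(\<Sum>bs\<in>distinct_tuples S (?l + ?m). tuple_monomial z bs (d @ e))
      = (\<Sum>cs\<in>distinct_tuples S (?m + ?l). tuple_monomial z cs (e @ d))"
  proof (rule sum.reindex_bij_witness[where i = "rotate ?m" and j = "rotate ?l"])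
    fix bs assume "bs \<in> distinct_tuples S (?l + ?m)"
    then have len: "length bs = ?l + ?m" by (simp add: distinct_tuples_def)
    then show "rotate ?m (rotate ?l bs) = bs"
      by (simp add: rotate_rotate add.commute)
    show "rotate ?l bs \<in> distinct_tuples S (?m + ?l)"
      using \<open>bs \<in> _\<close> by (simp add: distinct_tuples_def add.commute)
    have "tuple_monomial z (drop ?l bs @ take ?l bs) (e @ d)
        = tuple_monomial z (take ?l bs) d * tuple_monomial z (drop ?l bs) e"
      using len by (simp add: tuple_monomial_append mult.commute)
    also have "\<dots> = tuple_monomial z bs (d @ e)"
      using len tuple_monomial_append[of "take ?l bs" d z "drop ?l bs" e] by simp
    finally show "tuple_monomial z (rotate ?l bs) (e @ d) = tuple_monomial z bs (d @ e)"
      using len by (simp add: rotate_split)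
  next
    fix cs assume "cs \<in> distinct_tuples S (?m + ?l)"
    then show "rotate ?l (rotate ?m cs) = cs" and "rotate ?m cs \<in> distinct_tuples S (?l + ?m)"
      by (simp_all add: distinct_tuples_def rotate_rotate add.commute)
  qed
  then show ?thesis by (simp add: distinct_tuple_sum_eq_sum_tuple_monomial add.commute)
qed

lemma distinct_tuple_sum_Cons:
  assumes "finite S"
  shows "distinct_tuple_sum S (a # d) z = (\<Sum>x\<in>S. z x ^ a * distinct_tuple_sum (S - {x}) d z)"
proof -
  let ?T = "SIGMA x:S. distinct_tuples (S - {x}) (length d)"
  have inj: "inj_on (\<lambda>(x, bs). x # bs) ?T"
    by (auto simp: inj_on_def)
  have "distinct_tuple_sum S (a # d) z = (\<Sum>(x, bs)\<in>?T. tuple_monomial z (x # bs) (a # d))"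
    unfolding distinct_tuple_sum_eq_sum_tuple_monomial length_Cons distinct_tuples_Suc
      sum.reindex[OF inj] by (simp add: case_prod_unfold)
  also have "\<dots> = (\<Sum>x\<in>S. \<Sum>bs\<in>distinct_tuples (S - {x}) (length d). tuple_monomial z (x # bs) (a # d))"
    using assms by (subst sum.Sigma) (auto simp: finite_distinct_tuples)
  also have "\<dots> = (\<Sum>x\<in>S. z x ^ a * distinct_tuple_sum (S - {x}) d z)"
    by (simp add: distinct_tuple_sum_eq_sum_tuple_monomial tuple_monomial_def sum_distrib_left)
  finally show ?thesis .
qed

lemma distinct_tuple_sum_append_pair:
  assumes "finite S"
  shows "distinct_tuple_sum S (d @ [a, b]) z
       = (\<Sum>x\<in>S. \<Sum>y\<in>S - {x}. z x ^ a * z y ^ b * distinct_tuple_sum (S - {x, y}) d z)"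
proof -
  have "distinct_tuple_sum S (d @ [a, b]) z = distinct_tuple_sum S (a # b # d) z"
    using distinct_tuple_sum_append_commute[of S d "[a, b]"] by simp
  also have "\<dots> = (\<Sum>x\<in>S. z x ^ a * (\<Sum>y\<in>S - {x}. z y ^ b * distinct_tuple_sum (S - {x} - {y}) d z))"
    using assms by (simp add: distinct_tuple_sum_Cons)
  finally show ?thesis
    by (simp add: sum_distrib_left mult.assoc Diff_insert2[symmetric])
qed

lemma sum_offdiag_eq_sum_less_pairs:
  fixes g :: "'b::linorder \<Rightarrow> 'b \<Rightarrow> 'a::comm_monoid_add"
  assumes "finite A"
  shows "(\<Sum>x\<in>A. \<Sum>y\<in>A - {x}. g x y) = (\<Sum>i\<in>A. \<Sum>j\<in>{j\<in>A. i < j}. g i j + g j i)"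
proof -
  have "(\<Sum>y\<in>A - {x}. g x y) = (\<Sum>y\<in>{y\<in>A. x < y}. g x y) + (\<Sum>y\<in>{y\<in>A. y < x}. g x y)" for x
  proof -
    have "A - {x} = {y\<in>A. x < y} \<union> {y\<in>A. y < x}"
      by auto
    moreover have "sum (g x) ({y\<in>A. x < y} \<union> {y\<in>A. y < x})
        = (\<Sum>y\<in>{y\<in>A. x < y}. g x y) + (\<Sum>y\<in>{y\<in>A. y < x}. g x y)"
      by (rule sum.union_disjoint) (use assms in auto)
    ultimately show ?thesis
      by (simp only:)
  qed
  then have "(\<Sum>x\<in>A. \<Sum>y\<in>A - {x}. g x y)
      = (\<Sum>x\<in>A. \<Sum>y\<in>{y\<in>A. x < y}. g x y) + (\<Sum>x\<in>A. \<Sum>y\<in>{y\<in>A. y < x}. g x y)"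
    by (simp only: sum.distrib)
  also have "(\<Sum>x\<in>A. \<Sum>y\<in>{y\<in>A. y < x}. g x y) = (\<Sum>y\<in>A. \<Sum>x\<in>{x\<in>A. y < x}. g x y)"
    using sum.swap_restrict[OF assms assms, of g "\<lambda>x y. y < x"] .
  finally show ?thesis
    by (simp only: sum.distrib)
qed

lemma distinct_tuple_sum_square_minus_product:
  assumes "finite S"
  shows "distinct_tuple_sum S (d @ [0, 2]) z - distinct_tuple_sum S (d @ [1, 1]) z
       = (\<Sum>i\<in>S. \<Sum>j\<in>{j\<in>S. i < j}. distinct_tuple_sum (S - {i, j}) d z * (z i - z j)^2)"
proof -
  define D where "D x y = distinct_tuple_sum (S - {x, y}) d z" for x y
  have "distinct_tuple_sum S (d @ [0, 2]) z - distinct_tuple_sum S (d @ [1, 1]) z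
      = (\<Sum>x\<in>S. \<Sum>y\<in>S - {x}. z x ^ 0 * z y ^ 2 * D x y - z x ^ 1 * z y ^ 1 * D x y)"
    by (simp only: distinct_tuple_sum_append_pair[OF assms] sum_subtractf D_def)
  also have "\<dots> = (\<Sum>i\<in>S. \<Sum>j\<in>{j\<in>S. i < j}.
      (z j ^ 2 - z i * z j) * D i j + (z i ^ 2 - z j * z i) * D j i)"
    by (simp add: sum_offdiag_eq_sum_less_pairs[OF assms] left_diff_distrib)
  also have "\<dots> = (\<Sum>i\<in>S. \<Sum>j\<in>{j\<in>S. i < j}. D i j * (z i - z j)^2)"
  proof -
    have "(z j ^ 2 - z i * z j) * D i j + (z i ^ 2 - z j * z i) * D j i = D i j * (z i - z j)^2" for i j
    proof -
      have "D j i = D i j"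
        by (simp add: D_def insert_commute)
      then show ?thesis
        by (simp add: power2_eq_square algebra_simps)
    qed
    then show ?thesis
      by (simp only:)
  qed
  finally show ?thesis
    unfolding D_def .
qed

theorem lemma3p7:
  fixes z :: "nat \<Rightarrow> 'a::comm_ring_1"
    and n m1 m2 :: nat
  assumes "n \<ge> 2" and "m2 \<ge> 1"
  shows "M m2 m1 n z =
    (\<Sum>i\<in>{1..n}. \<Sum>j\<in>{i<..n}.
       monomial_inc (replicate (m2 - 1) 2 @ replicate m1 1) i j n z * (z i - z j)^2)"
proof -
  \<comment> \<open>The identity holds for every n.\<close>
  define d :: "nat list" where "d = replicate (m2 - 1) 2 @ replicate m1 1"
  have first: "replicate m2 2 @ replicate m1 1 @ [0] = [2] @ (d @ [0])"
    using \<open>m2 \<ge> 1\<close> by (cases m2) (simp_all add: d_def)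
  have second: "replicate (m2 - 1) 2 @ replicate (m1 + 2) 1 = d @ [1, 1]"
    by (simp only: d_def replicate_add append_assoc) (simp add: numeral_2_eq_2)
  have greater: "{j \<in> {1..n}. i < j} = {i<..n}" for i :: nat
    by auto
  have "M m2 m1 n z = distinct_tuple_sum {1..n} (d @ [0, 2]) z - distinct_tuple_sum {1..n} (d @ [1, 1]) z"
    unfolding M_def first second distinct_tuple_sum_append_commute[of _ "[2]"] by simp
  also have "\<dots> = (\<Sum>i\<in>{1..n}. \<Sum>j\<in>{i<..n}. monomial_inc d i j n z * (z i - z j)^2)"
    unfolding distinct_tuple_sum_square_minus_product[OF finite_atLeastAtMost] greater monomial_inc_def ..
  finally show ?thesis
    unfolding d_def .
qed

end
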